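(* For $n\ge 1$, let $\gamma(n)$ denote the number of partitions of $n$ having no part equal to $1$ and in which the largest part appears at least twice. Then for all $n\ge 26$, $$\gamma(n)\ \ge\ \gamma(n-1).$$
   Context: Partitions with no part equal to $1$ whose largest part occurs at least twice are called ground state non-unitary partitions; $\gamma(n)$ counts those of size $n$ (for $n\ge1$). *)

theory Defs
  imports Main "HOL-Library.Multiset"
begin

definition is_partition :: "nat multiset \<Rightarrow> nat \<Rightarrow> bool" where
  "is_partition p n \<longleftrightarrow> (\<forall>x \<in># p. 0 < x) \<and> sum_mset p = n"

definition gsnu_partition :: "nat multiset \<Rightarrow> nat \<Rightarrow> bool" where
  "gsnu_partition p n \<longleftrightarrow> is_partition p n \<and> 1 \<notin># p \<and> p \<noteq> {#} \<and>
     count p (Max_mset p) \<ge> 2"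

definition gamma :: "nat \<Rightarrow> nat" where
  "gamma n = card {p. gsnu_partition p n}"

end

theory Submission
  imports Defs
begin

(* Write R_a(n) for the partitions of n into parts >= a and D_a(n) for those whose largest part
   is repeated, so that gamma(n) = |D_2(n)|. Raising the unique largest part gives
   |R_a(n+1)| = |D_a(n+1)| + |R_a(n)|, and removing a part a gives |R_a(n)| = |R_(a+1)(n)| + |R_a(n-a)|.
   Eliminating R_2, R_3, R_4 from these relations yields
     gamma(n) - gamma(n-1) = gamma(n-6) - gamma(n-7) + d(n) - d(n-1) + d(n-2),   d = |D_4|,
   and an injection of D_4(n-1) into the disjoint union of D_4(n) and D_4(n-2) makes the last three
   terms nonnegative for large n. Monotonicity therefore propagates upwards from the six base
   cases 26 <= n <= 31, which are computed. *)

section \<open>Partitions into parts bounded below\<close>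

definition partitions_ge :: "nat \<Rightarrow> nat \<Rightarrow> nat multiset set" where
  "partitions_ge a n = {p. (\<forall>x\<in>#p. a \<le> x) \<and> sum_mset p = n}"

lemma partitions_ge_0:
  assumes "0 < a"
  shows "partitions_ge a 0 = {{#}}"
proof -
  have "p = {#}" if "\<forall>x\<in>#p. a \<le> x" "sum_mset p = 0" for p
    using that assms by (cases p) auto
  then show ?thesis
    by (auto simp: partitions_ge_def)
qed

lemma size_le_sum_mset: "(\<forall>x\<in>#p. 0 < x) \<Longrightarrow> size p \<le> sum_mset (p :: nat multiset)"
  by (induction p) auto

lemma finite_partitions_ge:
  assumes "0 < a"
  shows "finite (partitions_ge a n)"
proof (rule finite_subset)
  show "partitions_ge a n \<subseteq> (\<Union>k\<le>n. multisets_of_size {..n} k)"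
  proof
    fix p assume p: "p \<in> partitions_ge a n"
    then have "\<forall>x\<in>#p. 0 < x"
      using assms by (auto simp: partitions_ge_def)
    with p have "size p \<le> n"
      using size_le_sum_mset[of p] by (auto simp: partitions_ge_def)
    moreover have "set_mset p \<subseteq> {..n}"
      using p by (auto simp: partitions_ge_def dest!: multi_member_split)
    ultimately show "p \<in> (\<Union>k\<le>n. multisets_of_size {..n} k)"
      by (auto simp: multisets_of_size_def)
  qed
qed (simp add: finite_multisets_of_size)

lemma partitions_ge_small:
  assumes "0 < n" "n < 2 * a"
  shows "partitions_ge a n = (if a \<le> n then {{#n#}} else {})"
proof -
  have "p = {#n#}" if p: "p \<in> partitions_ge a n" for p
  proof -
    have "p \<noteq> {#}"
      using p \<open>0 < n\<close> by (auto simp: partitions_ge_def)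
    then obtain x r where "p = add_mset x r"
      using multi_nonempty_split by blast
    moreover have "r = {#}"
    proof (rule ccontr)
      assume "r \<noteq> {#}"
      then obtain y r' where "r = add_mset y r'" using multi_nonempty_split by blast
      then show False
        using p \<open>p = add_mset x r\<close> assms(2) by (auto simp: partitions_ge_def)
    qed
    ultimately show ?thesis
      using p by (auto simp: partitions_ge_def)
  qed
  then have "partitions_ge a n \<subseteq> {{#n#}}"
    by blast
  moreover have "{#n#} \<in> partitions_ge a n \<longleftrightarrow> a \<le> n"
    by (simp add: partitions_ge_def)
  ultimately show ?thesis
    by auto
qed

lemma partitions_ge_split:
  assumes "a \<le> n"
  shows "partitions_ge a n = partitions_ge (Suc a) n \<union> add_mset a ` partitions_ge a (n - a)"
proof (intro equalityI subsetI)
  fix p assume p: "p \<in> partitions_ge a n"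
  show "p \<in> partitions_ge (Suc a) n \<union> add_mset a ` partitions_ge a (n - a)"
  proof (cases "a \<in># p")
    case True
    then obtain r where "p = add_mset a r" by (metis multi_member_split)
    with p have "r \<in> partitions_ge a (n - a)" by (auto simp: partitions_ge_def)
    with \<open>p = add_mset a r\<close> show ?thesis by blast
  next
    case False
    with p show ?thesis by (fastforce simp: partitions_ge_def Suc_le_eq le_less)
  qed
next
  fix p assume "p \<in> partitions_ge (Suc a) n \<union> add_mset a ` partitions_ge a (n - a)"
  with assms show "p \<in> partitions_ge a n"
    by (auto simp: partitions_ge_def)
qed

lemma card_partitions_ge_split:
  assumes "0 < a" "a \<le> n"
  shows "card (partitions_ge a n) = card (partitions_ge (Suc a) n) + card (partitions_ge a (n - a))"
proof -
  have "a \<notin># p" if "p \<in> partitions_ge (Suc a) n" for p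
    using that by (auto simp: partitions_ge_def)
  then have "partitions_ge (Suc a) n \<inter> add_mset a ` partitions_ge a (n - a) = {}"
    by fastforce
  moreover have "card (add_mset a ` partitions_ge a (n - a)) = card (partitions_ge a (n - a))"
    by (rule card_image) (simp add: inj_on_def)
  ultimately show ?thesis
    unfolding partitions_ge_split[OF \<open>a \<le> n\<close>]
    using assms by (simp add: finite_partitions_ge card_Un_disjoint)
qed

(* The branch a = 0 is junk (partitions_ge 0 n is infinite); the branch n < 2 * a, where at most
   one part fits, only makes evaluation by code_simp fast. *)
function count_partitions_ge :: "nat \<Rightarrow> nat \<Rightarrow> nat" where
  "count_partitions_ge a n =
     (if n = 0 then 1
      else if a = 0 then 0
      else if n < 2 * a then (if a \<le> n then 1 else 0)
      else count_partitions_ge (Suc a) n + count_partitions_ge a (n - a))"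
  by auto
termination
  by (relation "measures [snd, \<lambda>(a, n). Suc n - a]") auto

declare count_partitions_ge.simps [simp del]

lemma card_partitions_ge:
  assumes "0 < a"
  shows "card (partitions_ge a n) = count_partitions_ge a n"
  using assms
proof (induction a n rule: count_partitions_ge.induct)
  case (1 a n)
  consider "n = 0" | "0 < n" "n < 2 * a" | "2 * a \<le> n"
    by linarith
  then show ?case
  proof cases
    case 1
    with "1.prems" show ?thesis
      by (subst count_partitions_ge.simps) (simp add: partitions_ge_0)
  next
    case 2
    then show ?thesis
      by (subst count_partitions_ge.simps) (simp add: partitions_ge_small)
  next
    case 3
    with "1.prems" show ?thesis
      by (subst count_partitions_ge.simps) (simp add: card_partitions_ge_split[of a n] "1.IH")
  qed
qed

section \<open>Partitions with a repeated largest part\<close>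

definition rep_max_partitions :: "nat \<Rightarrow> nat \<Rightarrow> nat multiset set" where
  "rep_max_partitions a n = {p \<in> partitions_ge a n. p \<noteq> {#} \<and> 2 \<le> count p (Max_mset p)}"

lemma Max_mset_add_mset_upper:
  fixes x :: "'a :: linorder"
  assumes "\<forall>y\<in>#r. y \<le> x"
  shows "Max_mset (add_mset x r) = x"
  using assms by (auto intro: Max_eqI)

lemma rep_max_partitions_iff:
  "p \<in> rep_max_partitions a n \<longleftrightarrow>
     p \<in> partitions_ge a n \<and> (\<exists>x. 2 \<le> count p x \<and> (\<forall>y\<in>#p. y \<le> x))"
proof
  assume "p \<in> rep_max_partitions a n"
  then show "p \<in> partitions_ge a n \<and> (\<exists>x. 2 \<le> count p x \<and> (\<forall>y\<in>#p. y \<le> x))"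
    by (auto simp: rep_max_partitions_def)
next
  assume p: "p \<in> partitions_ge a n \<and> (\<exists>x. 2 \<le> count p x \<and> (\<forall>y\<in>#p. y \<le> x))"
  then obtain x where x: "2 \<le> count p x" "\<forall>y\<in>#p. y \<le> x"
    by blast
  then have "x \<in># p"
    by (simp add: Suc_le_eq flip: count_greater_zero_iff)
  with x have "Max_mset p = x"
    by (auto intro: Max_eqI)
  with p x \<open>x \<in># p\<close> show "p \<in> rep_max_partitions a n"
    by (auto simp: rep_max_partitions_def)
qed

lemma gamma_eq_card_rep_max_partitions: "gamma n = card (rep_max_partitions 2 n)"
proof -
  have "0 < x \<and> x \<noteq> 1 \<longleftrightarrow> 2 \<le> x" for x :: nat
    by arith
  then have "(\<forall>x\<in>#p. 0 < x) \<and> 1 \<notin># p \<longleftrightarrow> (\<forall>x\<in>#p. 2 \<le> x)" for p :: "nat multiset"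
    by blast
  then have "{p. gsnu_partition p n} = rep_max_partitions 2 n"
    by (auto simp: gsnu_partition_def is_partition_def rep_max_partitions_def partitions_ge_def)
  then show ?thesis
    by (simp add: gamma_def)
qed

definition raise_max :: "nat multiset \<Rightarrow> nat multiset" where
  "raise_max p = add_mset (Suc (Max_mset p)) (p - {#Max_mset p#})"

definition lower_max :: "nat multiset \<Rightarrow> nat multiset" where
  "lower_max p = add_mset (Max_mset p - 1) (p - {#Max_mset p#})"

lemma raise_max_partitions_ge:
  assumes q: "q \<in> partitions_ge a n" and "0 < n"
  shows "raise_max q \<in> partitions_ge a (Suc n) - rep_max_partitions a (Suc n)"
    and "lower_max (raise_max q) = q"
proof -
  have "q \<noteq> {#}"
    using assms by (auto simp: partitions_ge_def)
  define M where "M = Max_mset q"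
  define r where "r = q - {#M#}"
  have "M \<in># q"
    using \<open>q \<noteq> {#}\<close> by (simp add: M_def Max_in_mset)
  then have q_eq: "q = add_mset M r"
    by (simp add: r_def)
  have r_le: "\<forall>y\<in>#r. y \<le> M"
    by (auto simp: M_def r_def dest: in_diffD)
  have raise_eq: "raise_max q = add_mset (Suc M) r"
    by (simp add: raise_max_def M_def r_def)
  have Max_raise: "Max_mset (raise_max q) = Suc M"
    unfolding raise_eq by (rule Max_mset_add_mset_upper) (use r_le in auto)
  have "Suc M \<notin># r"
    using r_le by auto
  then have "count (raise_max q) (Suc M) = 1"
    by (simp add: raise_eq not_in_iff)
  moreover have "raise_max q \<in> partitions_ge a (Suc n)"
    using q \<open>M \<in># q\<close> unfolding raise_eq partitions_ge_def
    by (subst (asm) (2) q_eq) (auto simp: q_eq le_SucI)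
  ultimately show "raise_max q \<in> partitions_ge a (Suc n) - rep_max_partitions a (Suc n)"
    by (simp add: rep_max_partitions_def Max_raise)
  show "lower_max (raise_max q) = q"
    unfolding lower_max_def Max_raise by (simp add: raise_eq q_eq[symmetric])
qed

lemma lower_max_partitions_ge:
  assumes p: "p \<in> partitions_ge a (Suc n) - rep_max_partitions a (Suc n)" and "a \<le> n"
  shows "lower_max p \<in> partitions_ge a n"
    and "raise_max (lower_max p) = p"
proof -
  have "p \<noteq> {#}"
    using p by (auto simp: partitions_ge_def)
  define M where "M = Max_mset p"
  define r where "r = p - {#M#}"
  have "M \<in># p"
    using \<open>p \<noteq> {#}\<close> by (simp add: M_def Max_in_mset)
  then have p_eq: "p = add_mset M r"
    by (simp add: r_def)
  have "\<not> 2 \<le> count p M"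
    using p \<open>p \<noteq> {#}\<close> by (simp add: rep_max_partitions_def M_def)
  with \<open>M \<in># p\<close> have "count p M = 1"
    using count_greater_zero_iff[of p M] by linarith
  then have "M \<notin># r"
    by (simp add: r_def not_in_iff)
  moreover have "\<forall>y\<in>#r. y \<le> M"
    by (auto simp: M_def r_def dest: in_diffD)
  ultimately have r_less: "\<forall>y\<in>#r. y < M"
    by (fastforce simp: order_le_less)
  have parts: "\<forall>y\<in>#p. a \<le> y" and sum_p: "sum_mset p = Suc n"
    using p by (auto simp: partitions_ge_def)
  have "a < M"
  proof (rule ccontr)
    assume "\<not> a < M"
    then have "r = {#}"
      using parts r_less by (cases r) (auto simp: p_eq)
    then show False
      using sum_p \<open>\<not> a < M\<close> \<open>a \<le> n\<close> by (simp add: p_eq)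
  qed
  have lower_eq: "lower_max p = add_mset (M - 1) r"
    by (simp add: lower_max_def M_def r_def)
  have Max_lower: "Max_mset (lower_max p) = M - 1"
    unfolding lower_eq by (rule Max_mset_add_mset_upper) (use r_less in auto)
  show "raise_max (lower_max p) = p"
    unfolding raise_max_def Max_lower using \<open>a < M\<close> by (simp add: lower_eq p_eq[symmetric])
  show "lower_max p \<in> partitions_ge a n"
    unfolding lower_eq partitions_ge_def using parts sum_p \<open>a < M\<close> by (auto simp: p_eq)
qed

lemma card_partitions_ge_Suc:
  assumes "0 < a" "a \<le> n"
  shows "card (partitions_ge a (Suc n)) = card (rep_max_partitions a (Suc n)) + card (partitions_ge a n)"
proof -
  have "bij_betw raise_max (partitions_ge a n) (partitions_ge a (Suc n) - rep_max_partitions a (Suc n))"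
  proof (rule bij_betw_byWitness[where f' = lower_max])
    show "raise_max ` partitions_ge a n \<subseteq> partitions_ge a (Suc n) - rep_max_partitions a (Suc n)"
      using raise_max_partitions_ge(1) assms by blast
  qed (use raise_max_partitions_ge(2) lower_max_partitions_ge assms in auto)
  then have "card (partitions_ge a n) = card (partitions_ge a (Suc n) - rep_max_partitions a (Suc n))"
    by (rule bij_betw_same_card)
  moreover have "rep_max_partitions a (Suc n) \<subseteq> partitions_ge a (Suc n)"
    by (auto simp: rep_max_partitions_def)
  ultimately show ?thesis
    using assms finite_partitions_ge[of a "Suc n"]
    by (simp add: card_Diff_subset card_mono finite_subset)
qed

section \<open>Comparing consecutive counts of partitions into parts at least 4\<close>

lemma finite_rep_max_partitions: "0 < a \<Longrightarrow> finite (rep_max_partitions a n)"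
  by (rule finite_subset[OF _ finite_partitions_ge]) (auto simp: rep_max_partitions_def)

lemma Min_mset_add_mset_lower:
  fixes x :: "'a :: linorder"
  assumes "\<forall>y\<in>#r. x \<le> y"
  shows "Min_mset (add_mset x r) = x"
  using assms by (auto intro: Min_eqI)

definition lower_min :: "nat multiset \<Rightarrow> nat multiset" where
  "lower_min p = add_mset (Min_mset p - 1) (p - {#Min_mset p#})"

definition raise_min :: "nat multiset \<Rightarrow> nat multiset" where
  "raise_min p = add_mset (Suc (Min_mset p)) (p - {#Min_mset p#})"

lemma lower_min_rep_max_partitions:
  assumes p: "p \<in> rep_max_partitions a (Suc n)" and "a \<notin># p" and "3 \<le> size p"
  shows "lower_min p \<in> rep_max_partitions a n"
    and "raise_min (lower_min p) = p"
proof -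
  obtain x where x: "2 \<le> count p x" "\<forall>y\<in>#p. y \<le> x"
    and parts: "\<forall>y\<in>#p. a \<le> y" and sum_p: "sum_mset p = Suc n"
    using p by (auto simp: rep_max_partitions_iff partitions_ge_def)
  have "p \<noteq> {#}"
    using \<open>3 \<le> size p\<close> by auto
  define s where "s = Min_mset p"
  define r where "r = p - {#s#}"
  have "s \<in># p"
    using \<open>p \<noteq> {#}\<close> by (simp add: s_def Min_in_mset)
  then have p_eq: "p = add_mset s r"
    by (simp add: r_def)
  have r_ge: "\<forall>y\<in>#r. s \<le> y"
    by (auto simp: s_def r_def dest: in_diffD)
  have "a < s"
    using parts \<open>s \<in># p\<close> \<open>a \<notin># p\<close> by (metis order_le_less)
  have "2 \<le> count r x"
  proof (cases "s = x")
    case True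
    then have "set_mset r \<subseteq> {x}"
      using r_ge x(2) by (fastforce simp: p_eq)
    then have "count r x = size r"
      by (metis count_replicate_mset set_mset_subset_singletonD)
    with \<open>3 \<le> size p\<close> show ?thesis
      by (simp add: p_eq)
  next
    case False
    with x(1) show ?thesis
      by (simp add: p_eq)
  qed
  have lower_eq: "lower_min p = add_mset (s - 1) r"
    by (simp add: lower_min_def s_def r_def)
  show "lower_min p \<in> rep_max_partitions a n"
    unfolding rep_max_partitions_iff partitions_ge_def lower_eq
  proof (intro conjI exI CollectI)
    show "2 \<le> count (add_mset (s - 1) r) x"
      using \<open>2 \<le> count r x\<close> by (rule order_trans) simp
    show "\<forall>y\<in>#add_mset (s - 1) r. y \<le> x"
      using x(2) by (auto simp: p_eq)
    show "\<forall>y\<in>#add_mset (s - 1) r. a \<le> y"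
      using parts \<open>a < s\<close> by (auto simp: p_eq)
    show "sum_mset (add_mset (s - 1) r) = n"
      using sum_p \<open>a < s\<close> by (simp add: p_eq)
  qed
  have "Min_mset (lower_min p) = s - 1"
    unfolding lower_eq by (rule Min_mset_add_mset_lower) (use r_ge in auto)
  then show "raise_min (lower_min p) = p"
    unfolding raise_min_def using \<open>a < s\<close> by (simp add: lower_eq p_eq[symmetric])
qed

lemma card_rep_max_partitions_no_least_le:
  assumes "0 < a"
  shows "card {p \<in> rep_max_partitions a (Suc n). a \<notin># p \<and> 3 \<le> size p} \<le> card (rep_max_partitions a n)"
proof (rule card_inj_on_le)
  show "inj_on lower_min {p \<in> rep_max_partitions a (Suc n). a \<notin># p \<and> 3 \<le> size p}"
    by (rule inj_on_inverseI[where g = raise_min]) (use lower_min_rep_max_partitions(2) in blast)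
  show "lower_min ` {p \<in> rep_max_partitions a (Suc n). a \<notin># p \<and> 3 \<le> size p} \<subseteq> rep_max_partitions a n"
    using lower_min_rep_max_partitions(1) by blast
qed (rule finite_rep_max_partitions[OF assms])

lemma raise_least_rep_max_partitions:
  assumes p: "p \<in> rep_max_partitions a (Suc n)" and "a \<in># p" and "a < Max_mset p"
  shows "add_mset (Suc a) (p - {#a#}) \<in> rep_max_partitions a (Suc (Suc n))"
proof -
  obtain x where x: "2 \<le> count p x" "\<forall>y\<in>#p. y \<le> x"
    and parts: "\<forall>y\<in>#p. a \<le> y" and sum_p: "sum_mset p = Suc n"
    using p by (auto simp: rep_max_partitions_iff partitions_ge_def)
  define r where "r = p - {#a#}"
  have p_eq: "p = add_mset a r"
    using \<open>a \<in># p\<close> by (simp add: r_def)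
  have "Max_mset p \<le> x"
    using x(2) \<open>a \<in># p\<close> by (auto intro: Max.boundedI)
  with \<open>a < Max_mset p\<close> have "a < x"
    by simp
  have "2 \<le> count r x"
    using x(1) \<open>a < x\<close> by (simp add: p_eq)
  show ?thesis
    unfolding rep_max_partitions_iff partitions_ge_def r_def[symmetric]
  proof (intro conjI exI CollectI)
    show "2 \<le> count (add_mset (Suc a) r) x"
      using \<open>2 \<le> count r x\<close> by (rule order_trans) simp
    show "\<forall>y\<in>#add_mset (Suc a) r. y \<le> x"
      using x(2) \<open>a < x\<close> by (simp add: p_eq)
    show "\<forall>y\<in>#add_mset (Suc a) r. a \<le> y"
      using parts by (simp add: p_eq)
    show "sum_mset (add_mset (Suc a) r) = Suc (Suc n)"
      using sum_p by (simp add: p_eq)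
  qed
qed

lemma card_rep_max_partitions_least_le:
  assumes "0 < a"
  shows "card {p \<in> rep_max_partitions a (Suc n). a \<in># p \<and> a < Max_mset p}
    \<le> card {q \<in> rep_max_partitions a (Suc (Suc n)). Suc a \<in># q}"
proof (rule card_inj_on_le)
  show "inj_on (\<lambda>p. add_mset (Suc a) (p - {#a#})) {p \<in> rep_max_partitions a (Suc n). a \<in># p \<and> a < Max_mset p}"
    by (rule inj_on_inverseI[where g = "\<lambda>q. add_mset a (q - {#Suc a#})"]) simp
  show "(\<lambda>p. add_mset (Suc a) (p - {#a#})) ` {p \<in> rep_max_partitions a (Suc n). a \<in># p \<and> a < Max_mset p}
    \<subseteq> {q \<in> rep_max_partitions a (Suc (Suc n)). Suc a \<in># q}"
    using raise_least_rep_max_partitions by auto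
qed (simp add: finite_rep_max_partitions[OF assms])

lemma rep_max_partitions_equal_parts:
  assumes p: "p \<in> rep_max_partitions a m"
    and cases: "(a \<in># p \<and> Max_mset p \<le> a) \<or> (a \<notin># p \<and> size p \<le> 2)"
  shows "(\<exists>k. p = replicate_mset k a \<and> m = k * a) \<or> (\<exists>x. p = replicate_mset 2 x \<and> m = 2 * x)"
proof -
  obtain x where x: "2 \<le> count p x" "\<forall>y\<in>#p. y \<le> x"
    and parts: "\<forall>y\<in>#p. a \<le> y" and sum_p: "sum_mset p = m"
    using p by (auto simp: rep_max_partitions_iff partitions_ge_def)
  from cases show ?thesis
  proof
    assume "a \<in># p \<and> Max_mset p \<le> a"
    then have "set_mset p \<subseteq> {a}"
      using parts by (fastforce dest: Max_ge[OF finite_set_mset])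
    then have p_eq: "p = replicate_mset (size p) a"
      by (rule set_mset_subset_singletonD)
    moreover have "m = size p * a"
      using sum_p by (subst (asm) p_eq) (simp add: sum_mset_replicate_mset)
    ultimately show ?thesis
      by blast
  next
    assume "a \<notin># p \<and> size p \<le> 2"
    have "replicate_mset 2 x \<subseteq># p"
      using x(1) by (simp add: count_le_replicate_mset_subset_eq)
    moreover have "size p \<le> size (replicate_mset 2 x)"
      using \<open>a \<notin># p \<and> size p \<le> 2\<close> by simp
    ultimately have "p = replicate_mset 2 x"
      by (metis mset_subset_size not_less subset_mset.le_less)
    with sum_p show ?thesis
      by auto
  qed
qed

lemma double_part_rep_max_partitions:
  assumes "a \<le> y" "y \<le> x"
  shows "{#x, x, y#} \<in> rep_max_partitions a (2 * x + y)"
  using assms by (auto simp: rep_max_partitions_iff partitions_ge_def intro!: exI[of _ x])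

lemma card_rep_max_partitions_4_equal_parts_le:
  assumes "25 \<le> n"
  shows "card {p \<in> rep_max_partitions 4 (Suc n). (4 \<in># p \<and> Max_mset p \<le> 4) \<or> (4 \<notin># p \<and> size p \<le> 2)}
    \<le> card {q \<in> rep_max_partitions 4 (Suc (Suc n)). 5 \<notin># q}"
    (is "card ?E \<le> card ?T")
proof (cases "even (Suc n)")
  case False
  have "p \<notin> ?E" for p
    using rep_max_partitions_equal_parts[of p 4 "Suc n"] False by (auto; presburger)
  then have "?E = {}"
    by blast
  then show ?thesis
    by (metis card.empty zero_le)
next
  case True
  then obtain k where k: "Suc n = 2 * k"
    by blast
  have "card ?E \<le> card {replicate_mset (k div 2) 4, replicate_mset 2 k}"
  proof (rule card_mono)
    show "?E \<subseteq> {replicate_mset (k div 2) 4, replicate_mset 2 k}"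
    proof
      fix p assume "p \<in> ?E"
      then have "(\<exists>j. p = replicate_mset j 4 \<and> 2 * k = j * 4) \<or> (\<exists>x. p = replicate_mset 2 x \<and> 2 * k = 2 * x)"
        using rep_max_partitions_equal_parts[of p 4 "Suc n"] k by auto
      then show "p \<in> {replicate_mset (k div 2) 4, replicate_mset 2 k}"
        by auto
    qed
  qed simp
  also have "\<dots> \<le> 2"
    by (simp add: card_insert_if)
  also have "2 = card {{#k - 3, k - 3, 7#}, {#k - 4, k - 4, 9#}}"
  proof -
    have "9 \<notin># {#k - 3, k - 3, 7#}"
      using k assms by simp
    then have "{#k - 3, k - 3, 7#} \<noteq> {#k - 4, k - 4, 9#}"
      by force
    then show ?thesis
      by simp
  qed
  also have "\<dots> \<le> card ?T"
  proof (rule card_mono)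
    show "finite ?T"
      by (simp add: finite_rep_max_partitions)
    have "{#k - 3, k - 3, 7#} \<in> rep_max_partitions 4 (2 * (k - 3) + 7)"
      and "{#k - 4, k - 4, 9#} \<in> rep_max_partitions 4 (2 * (k - 4) + 9)"
      using k assms by (intro double_part_rep_max_partitions; simp)+
    moreover have "2 * (k - 3) + 7 = Suc (Suc n)" "2 * (k - 4) + 9 = Suc (Suc n)"
      using k assms by simp_all
    ultimately show "{{#k - 3, k - 3, 7#}, {#k - 4, k - 4, 9#}} \<subseteq> ?T"
      using k assms by auto
  qed
  finally show ?thesis .
qed

(* Lower the smallest part if there is no part 4 and at least three parts; turn a part 4 into a 5
   if some part exceeds 4; the remaining partitions have equal parts and are matched with
   partitions of n + 2 without a part 5. *)
lemma card_rep_max_partitions_4_Suc_le: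
  assumes "25 \<le> n"
  shows "card (rep_max_partitions 4 (Suc n))
    \<le> card (rep_max_partitions 4 n) + card (rep_max_partitions 4 (Suc (Suc n)))"
proof -
  let ?S = "rep_max_partitions 4 (Suc n)" and ?T = "rep_max_partitions 4 (Suc (Suc n))"
  let ?B = "{p \<in> ?S. 4 \<notin># p \<and> 3 \<le> size p}"
  let ?C = "{p \<in> ?S. 4 \<in># p \<and> 4 < Max_mset p}"
  let ?E = "{p \<in> ?S. (4 \<in># p \<and> Max_mset p \<le> 4) \<or> (4 \<notin># p \<and> size p \<le> 2)}"
  have "finite ?T"
    by (simp add: finite_rep_max_partitions)
  then have "card ({q \<in> ?T. 5 \<in># q} \<union> {q \<in> ?T. 5 \<notin># q})
      = card {q \<in> ?T. 5 \<in># q} + card {q \<in> ?T. 5 \<notin># q}"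
    by (intro card_Un_disjoint) auto
  moreover have "{q \<in> ?T. 5 \<in># q} \<union> {q \<in> ?T. 5 \<notin># q} = ?T"
    by blast
  ultimately have card_5_split: "card {q \<in> ?T. 5 \<in># q} + card {q \<in> ?T. 5 \<notin># q} = card ?T"
    by simp
  have "?S = ?B \<union> ?C \<union> ?E"
    by auto
  then have "card ?S = card (?B \<union> ?C \<union> ?E)"
    by (rule arg_cong)
  also have "\<dots> \<le> card ?B + card ?C + card ?E"
    using card_Un_le[of "?B \<union> ?C" ?E] card_Un_le[of ?B ?C] by linarith
  also have "\<dots> \<le> card (rep_max_partitions 4 n) + card {q \<in> ?T. 5 \<in># q} + card {q \<in> ?T. 5 \<notin># q}"
    using card_rep_max_partitions_no_least_le[of 4 n] card_rep_max_partitions_least_le[of 4 n]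
      card_rep_max_partitions_4_equal_parts_le[OF assms]
    by (simp add: add_mono)
  also have "\<dots> = card (rep_max_partitions 4 n) + card ?T"
    using card_5_split by simp
  finally show ?thesis .
qed

section \<open>The recurrence and the base cases\<close>

(* Coefficientwise form of (1 - q) (1 - q^6) Gamma(q) = (1 - q + q^2) D_4(q), which holds up to a
   polynomial because Gamma(q) and D_4(q) agree with (1 - q) R_2(q) and
   (1 - q) R_4(q) = (1 - q) (1 - q^2) (1 - q^3) R_2(q) in high degrees. *)
lemma gamma_recurrence:
  assumes "2 \<le> n"
  shows "gamma (n + 8) + gamma (n + 1) + card (rep_max_partitions 4 (n + 7))
    = gamma (n + 7) + gamma (n + 2) + card (rep_max_partitions 4 (n + 8))
      + card (rep_max_partitions 4 (n + 6))"
proof -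
  have drop2: "card (partitions_ge 2 (m + 2)) = card (partitions_ge 3 (m + 2)) + card (partitions_ge 2 m)" for m
    using card_partitions_ge_split[of 2 "m + 2"] by simp
  have drop3: "card (partitions_ge 3 (m + 3)) = card (partitions_ge 4 (m + 3)) + card (partitions_ge 3 m)" for m
    using card_partitions_ge_split[of 3 "m + 3"] by simp
  have gamma: "card (partitions_ge 2 (m + 1)) = gamma (m + 1) + card (partitions_ge 2 m)" if "2 \<le> m" for m
    using card_partitions_ge_Suc[of 2 m] that by (simp add: gamma_eq_card_rep_max_partitions)
  have rep4: "card (partitions_ge 4 (m + 1)) = card (rep_max_partitions 4 (m + 1)) + card (partitions_ge 4 m)"
    if "4 \<le> m" for m
    using card_partitions_ge_Suc[of 4 m] that by simp
  show ?thesis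
    using drop2[of "n + 6"] drop2[of "n + 5"] drop2[of "n + 4"] drop2[of "n + 3"] drop2[of "n + 2"]
      drop2[of "n + 1"] drop2[of n] drop3[of "n + 5"] drop3[of "n + 4"] drop3[of "n + 3"] drop3[of "n + 2"]
      gamma[of "n + 7"] gamma[of "n + 6"] gamma[of "n + 1"] gamma[of n] rep4[of "n + 7"] rep4[of "n + 6"]
      rep4[of "n + 5"] assms
    \<comment> \<open>normalise every \<open>n + i + j\<close> to \<open>n + k\<close>, so that linarith sees equal atoms\<close>
    unfolding add.assoc numeral_plus_numeral add_num_simps one_add_one one_plus_numeral numeral_plus_one
    by linarith
qed

lemma gamma_eq_count_partitions_ge:
  assumes "3 \<le> n"
  shows "gamma n = count_partitions_ge 2 n - count_partitions_ge 2 (n - 1)"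
  using card_partitions_ge_Suc[of 2 "n - 1"] assms
  by (simp add: gamma_eq_card_rep_max_partitions card_partitions_ge)

lemma gamma_mono_26_31:
  assumes "26 \<le> n" "n \<le> 31"
  shows "gamma (n - 1) \<le> gamma n"
proof -
  have "count_partitions_ge 2 24 = 320 \<and> count_partitions_ge 2 25 = 383 \<and>
    count_partitions_ge 2 26 = 478 \<and> count_partitions_ge 2 27 = 574 \<and>
    count_partitions_ge 2 28 = 708 \<and> count_partitions_ge 2 29 = 847 \<and>
    count_partitions_ge 2 30 = 1039 \<and> count_partitions_ge 2 31 = 1238"
    by code_simp
  moreover have "n \<in> {26, 27, 28, 29, 30, 31}"
    using assms by auto
  ultimately show ?thesis
    by (auto simp: gamma_eq_count_partitions_ge)
qed

theorem proposition2:
  fixes n :: nat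
  assumes "n \<ge> 26"
  shows "gamma n \<ge> gamma (n - 1)"
  using assms
proof (induction n rule: less_induct)
  case (less n)
  show ?case
  proof (cases "n \<le> 31")
    case True
    with less.prems show ?thesis
      by (rule gamma_mono_26_31)
  next
    case False
    define m where "m = n - 8"
    have n: "n = m + 8" "n - 1 = m + 7" and "24 \<le> m"
      using False by (simp_all add: m_def)
    have "gamma (m + 1) \<le> gamma (m + 2)"
      using less.IH[of "m + 2"] \<open>24 \<le> m\<close> n by simp
    moreover have "card (rep_max_partitions 4 (m + 7))
        \<le> card (rep_max_partitions 4 (m + 6)) + card (rep_max_partitions 4 (m + 8))"
      using card_rep_max_partitions_4_Suc_le[of "m + 6"] \<open>24 \<le> m\<close> by (simp add: ac_simps)
    moreover have "gamma (m + 8) + gamma (m + 1) + card (rep_max_partitions 4 (m + 7))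
        = gamma (m + 7) + gamma (m + 2) + card (rep_max_partitions 4 (m + 8))
          + card (rep_max_partitions 4 (m + 6))"
      using gamma_recurrence \<open>24 \<le> m\<close> by simp
    ultimately have "gamma (m + 7) \<le> gamma (m + 8)"
      by linarith
    with n show ?thesis
      by metis
  qed
qed

end
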